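(* Let $\alpha=\exp\left(\frac{2\pi i}{5}\right)$, let $c,x\in\mathbb{C}$, and let $(a_1,A_1),\dots,(a_p,A_p)$ and $(b_1,B_1),\dots,(b_q,B_q)$ be parameter pairs ($a_j,b_j\in\mathbb{C}$, $A_j,B_j$ nonzero reals) such that all Pochhammer symbols involved are well defined and all series involved converge. Then $$\sum_{k=0}^{4}{}_p\Psi^{*}_q\left[\begin{array}{c}(a_1,A_1),\dots,(a_p,A_p);\\(b_1,B_1),\dots,(b_q,B_q);\end{array} c(x\alpha^k)^2\right] =5\,{}_p\Psi^{*}_{q+4}\left[\begin{array}{c}(a_1,5A_1),\dots,(a_p,5A_p);\\ \left(\tfrac15,1\right),\left(\tfrac25,1\right),\left(\tfrac35,1\right),\left(\tfrac45,1\right),(b_1,5B_1),\dots,(b_q,5B_q);\end{array}\left(\frac{cx^2}{5}\right)^5\right].$$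
   Context: For $\lambda,\nu\in\mathbb{C}$ the Pochhammer symbol is $(\lambda)_\nu=\Gamma(\lambda+\nu)/\Gamma(\lambda)$ (with $(\lambda)_0=1$). The normalized Fox–Wright function is $${}_p\Psi^{*}_q\left[\begin{array}{c}(\alpha_1,A_1),\dots,(\alpha_p,A_p);\\(\beta_1,B_1),\dots,(\beta_q,B_q);\end{array}z\right]=\sum_{n=0}^{\infty}\frac{(\alpha_1)_{nA_1}\cdots(\alpha_p)_{nA_p}}{(\beta_1)_{nB_1}\cdots(\beta_q)_{nB_q}}\frac{z^n}{n!},$$ where $\alpha_i,\beta_j\in\mathbb{C}$ and $A_i,B_j$ are nonzero reals. Values of parameters and variables for which the expressions do not make sense are excluded. *)

theory Defs
  imports "HOL-Analysis.Analysis"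
begin

definition poch_gen :: "complex \<Rightarrow> real \<Rightarrow> complex" where
  "poch_gen l v = (if v = 0 then 1 else Gamma (l + of_real v) / Gamma l)"

definition fw_coeff :: "(complex \<times> real) list \<Rightarrow> (complex \<times> real) list \<Rightarrow> nat \<Rightarrow> complex" where
  "fw_coeff as bs n =
     (\<Prod>(a, A) \<leftarrow> as. poch_gen a (real n * A)) / (\<Prod>(b, B) \<leftarrow> bs. poch_gen b (real n * B))"

definition fw_term :: "(complex \<times> real) list \<Rightarrow> (complex \<times> real) list \<Rightarrow> complex \<Rightarrow> nat \<Rightarrow> complex" where
  "fw_term as bs z n = fw_coeff as bs n * z ^ n / fact n"

definition fox_wright_star :: "(complex \<times> real) list \<Rightarrow> (complex \<times> real) list \<Rightarrow> complex \<Rightarrow> complex" where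
  "fox_wright_star as bs z = (\<Sum>n. fw_term as bs z n)"

definition poch_ok :: "complex \<times> real \<Rightarrow> bool" where
  "poch_ok p = (\<forall>n::nat. fst p \<notin> \<int>\<^sub>\<le>\<^sub>0 \<and> fst p + of_real (real n * snd p) \<notin> \<int>\<^sub>\<le>\<^sub>0)"

end

theory Submission
  imports Defs
begin

text \<open>
  Summing a power series \<open>\<Sum>\<^sub>n a\<^sub>n z\<^sup>n\<close> over the points \<open>\<omega>\<^sup>j z\<close>, \<open>j < k\<close>, for a primitive
  \<open>k\<close>-th root of unity \<open>\<omega>\<close> kills every term with \<open>k \<nmid> n\<close> and multiplies the others by \<open>k\<close>.
  Here \<open>z = c x\<^sup>2\<close> and \<open>\<omega> = \<alpha>\<^sup>2\<close>, which is again primitive since \<open>gcd 2 5 = 1\<close>. The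
  surviving terms with \<open>n = 5m\<close> are rewritten by Gauss' multiplication formula
  \<open>(5m)! = 5\<^sup>5\<^sup>m m! (1/5)\<^sub>m (2/5)\<^sub>m (3/5)\<^sub>m (4/5)\<^sub>m\<close>, which turns them into the terms of the
  Fox--Wright function on the right-hand side.
\<close>

lemma pochhammer_of_nat_mult_plus_1:
  assumes "k > 0"
  shows "pochhammer (of_nat (k * m) + 1) k
         = (of_nat k ^ k * (\<Prod>j=1..k. of_nat j / of_nat k + of_nat m) :: 'a::field_char_0)"
proof -
  have "pochhammer (of_nat (k * m) + 1) k = (\<Prod>j=1..k. of_nat (k * m + j) :: 'a)"
    unfolding pochhammer_prod
    by (rule prod.reindex_bij_witness[of _ "\<lambda>j. j - 1" Suc]) auto
  also have "\<dots> = (\<Prod>j=1..k. of_nat k * (of_nat j / of_nat k + of_nat m))"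
    using assms by (intro prod.cong) (auto simp: field_simps)
  also have "\<dots> = of_nat k ^ k * (\<Prod>j=1..k. of_nat j / of_nat k + of_nat m)"
    by (simp add: prod.distrib)
  finally show ?thesis .
qed

lemma fact_mult_eq_prod_pochhammer:
  assumes "k > 0"
  shows "(fact (k * m) :: 'a::field_char_0)
         = of_nat k ^ (k * m) * (\<Prod>j=1..k. pochhammer (of_nat j / of_nat k) m)"
proof (induction m)
  case 0
  then show ?case by simp
next
  case (Suc m)
  have "(fact (k * Suc m) :: 'a) = pochhammer 1 (k * m + k)"
    by (simp add: pochhammer_fact add.commute)
  also have "\<dots> = fact (k * m) * pochhammer (of_nat (k * m) + 1) k"
    by (simp only: pochhammer_product' pochhammer_fact) (simp add: add.commute)
  also have "\<dots> = fact (k * m) * (of_nat k ^ k * (\<Prod>j=1..k. of_nat j / of_nat k + of_nat m))"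
    by (simp only: pochhammer_of_nat_mult_plus_1[OF assms])
  also have "\<dots> = of_nat k ^ (k * Suc m)
      * (\<Prod>j=1..k. pochhammer (of_nat j / of_nat k) m * (of_nat j / of_nat k + of_nat m))"
    by (simp only: Suc.IH prod.distrib) (simp add: power_add mult_ac)
  also have "\<dots> = of_nat k ^ (k * Suc m) * (\<Prod>j=1..k. pochhammer (of_nat j / of_nat k) (Suc m))"
    by (simp add: pochhammer_Suc)
  finally show ?case .
qed

lemma exp_2pi_divide_power_eq_1_iff:
  assumes "k > 0"
  shows "exp (2 * of_real pi * \<i> / of_nat k) ^ n = 1 \<longleftrightarrow> k dvd n"
proof -
  have "exp (2 * of_real pi * \<i> / of_nat k) ^ n = exp (2 * of_real pi * \<i> * of_nat n / of_nat k)"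
    by (simp flip: exp_of_nat_mult add: mult_ac)
  then show ?thesis
    using complex_root_unity_eq_1[of k n] assms by simp
qed

lemma sum_powers_root_of_unity:
  fixes \<omega> :: "'a::field"
  assumes primitive: "\<And>n. \<omega> ^ n = 1 \<longleftrightarrow> k dvd n"
  shows "(\<Sum>j<k. (\<omega> ^ n) ^ j) = (if k dvd n then of_nat k else 0)"
proof (cases "k dvd n")
  case True
  then have "\<omega> ^ n = 1" by (simp add: primitive)
  with True show ?thesis by simp
next
  case False
  have "(\<omega> ^ n) ^ k = 1"
    by (simp add: primitive flip: power_mult)
  with False show ?thesis
    by (simp add: geometric_sum primitive)
qed

lemma sums_multisection:
  fixes a :: "nat \<Rightarrow> 'a::real_normed_field"
  assumes primitive: "\<And>n. \<omega> ^ n = 1 \<longleftrightarrow> k dvd n" and "k > 0"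
    and summable: "\<And>j. j < k \<Longrightarrow> summable (\<lambda>n. a n * (\<omega> ^ j * z) ^ n)"
  shows "(\<lambda>m. of_nat k * a (k * m) * z ^ (k * m)) sums (\<Sum>j<k. \<Sum>n. a n * (\<omega> ^ j * z) ^ n)"
proof -
  define h where "h n = (if k dvd n then of_nat k * a n * z ^ n else 0)" for n
  have h_eq: "(\<Sum>j<k. a n * (\<omega> ^ j * z) ^ n) = h n" for n
  proof -
    have "(\<Sum>j<k. a n * (\<omega> ^ j * z) ^ n) = a n * z ^ n * (\<Sum>j<k. (\<omega> ^ n) ^ j)"
      by (simp add: sum_distrib_left power_mult_distrib mult_ac flip: power_mult)
    then show ?thesis
      by (simp add: h_def sum_powers_root_of_unity[OF primitive])
  qed
  have "(\<lambda>n. \<Sum>j<k. a n * (\<omega> ^ j * z) ^ n) sums (\<Sum>j<k. \<Sum>n. a n * (\<omega> ^ j * z) ^ n)"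
    using summable by (intro sums_sum summable_sums) simp
  then have "h sums (\<Sum>j<k. \<Sum>n. a n * (\<omega> ^ j * z) ^ n)"
    by (simp only: h_eq)
  moreover have "strict_mono (\<lambda>m. k * m)"
    using \<open>k > 0\<close> by (simp add: strict_mono_def)
  ultimately show ?thesis
    by (subst (asm) sums_mono_reindex[symmetric, of "\<lambda>m. k * m"]) (auto simp: h_def)
qed

lemma poch_gen_of_nat: "z \<notin> \<int>\<^sub>\<le>\<^sub>0 \<Longrightarrow> poch_gen z (real m) = pochhammer z m"
  by (simp add: poch_gen_def pochhammer_Gamma Gamma_eq_zero_iff)

lemma of_nat_divide_notin_nonpos_Ints:
  assumes "j > 0" "k > 0"
  shows "(of_nat j / of_nat k :: complex) \<notin> \<int>\<^sub>\<le>\<^sub>0"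
proof -
  have "(of_nat j / of_nat k :: complex) = of_real (real j / real k)" by simp
  moreover have "real j / real k \<notin> \<int>\<^sub>\<le>\<^sub>0"
    using assms nonpos_Ints_nonpos[of "real j / real k"] by (auto simp: divide_le_0_iff)
  ultimately show ?thesis by (metis of_real_in_nonpos_Ints_iff)
qed

lemma pochhammer_of_nat_divide_neq_0:
  assumes "j > 0" "k > 0"
  shows "pochhammer (of_nat j / of_nat k :: 'a::field_char_0) m \<noteq> 0"
proof
  assume "pochhammer (of_nat j / of_nat k :: 'a) m = 0"
  then obtain i where "(of_nat j / of_nat k :: 'a) = - of_nat i"
    by (auto simp: pochhammer_eq_0_iff)
  with assms have "of_nat j = - (of_nat (i * k) :: 'a)"
    by (simp add: field_simps)
  with assms show False
    by (metis add_eq_0_iff_both_eq_0 eq_neg_iff_add_eq_0 not_gr0 of_nat_add of_nat_eq_0_iff)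
qed

lemma fw_coeff_multisection:
  assumes "k > 0"
  shows "fw_coeff (map (\<lambda>(a, A). (a, of_nat k * A)) as)
            (map (\<lambda>j. (of_nat j / of_nat k, 1)) [1..<k] @ map (\<lambda>(b, B). (b, of_nat k * B)) bs) m
         = fw_coeff as bs (k * m) / (\<Prod>j=1..<k. pochhammer (of_nat j / of_nat k) m)"
proof -
  have scale: "(\<Prod>(a, A) \<leftarrow> map (\<lambda>(a, A). (a, of_nat k * A)) ps. poch_gen a (real m * A))
             = (\<Prod>(a, A) \<leftarrow> ps. poch_gen a (real (k * m) * A))" for ps :: "(complex \<times> real) list"
    by (induction ps) (auto simp: mult_ac)
  have fractions: "(\<Prod>(b, B) \<leftarrow> map (\<lambda>j. (of_nat j / of_nat k, 1)) [1..<k]. poch_gen b (real m * B))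
        = (\<Prod>j=1..<k. pochhammer (of_nat j / of_nat k) m)"
  proof -
    have "(\<Prod>(b, B) \<leftarrow> map (\<lambda>j. (of_nat j / of_nat k, 1)) [1..<k]. poch_gen b (real m * B))
          = (\<Prod>j=1..<k. poch_gen (of_nat j / of_nat k) (real m))"
      unfolding map_map by (subst prod.distinct_set_conv_list[symmetric]) (simp_all add: o_def)
    also have "\<dots> = (\<Prod>j=1..<k. pochhammer (of_nat j / of_nat k) m)"
      using assms by (intro prod.cong) (simp_all add: poch_gen_of_nat of_nat_divide_notin_nonpos_Ints)
    finally show ?thesis .
  qed
  show ?thesis
    unfolding fw_coeff_def map_append prod_list.append scale fractions by simp
qed

lemma fw_term_multisection:
  assumes "k > 0"
  shows "fw_term (map (\<lambda>(a, A). (a, of_nat k * A)) as)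
            (map (\<lambda>j. (of_nat j / of_nat k, 1)) [1..<k] @ map (\<lambda>(b, B). (b, of_nat k * B)) bs)
            ((w / of_nat k) ^ k) m
         = fw_term as bs w (k * m)"
proof -
  have "(fact (k * m) :: complex)
        = of_nat k ^ (k * m) * (\<Prod>j=1..<k. pochhammer (of_nat j / of_nat k) m) * fact m"
    using assms by (simp add: fact_mult_eq_prod_pochhammer prod.last_plus pochhammer_fact[symmetric])
  moreover have "(\<Prod>j=1..<k. pochhammer (of_nat j / of_nat k :: complex) m) \<noteq> 0"
    using assms by (simp add: pochhammer_of_nat_divide_neq_0)
  moreover have "((w / of_nat k) ^ k) ^ m = w ^ (k * m) / of_nat k ^ (k * m)"
    by (simp add: power_divide power_mult)
  ultimately show ?thesis
    unfolding fw_term_def fw_coeff_multisection[OF assms] by (simp add: field_simps)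
qed

theorem theorem5:
  fixes as bs :: "(complex \<times> real) list" and c x :: complex
  defines "\<alpha> \<equiv> exp (2 * of_real pi * \<i> / 5)"
  assumes nzA: "\<forall>(a, A) \<in> set as. A \<noteq> 0"
    and nzB: "\<forall>(b, B) \<in> set bs. B \<noteq> 0"
    and okA: "\<forall>p \<in> set as. poch_ok p"
    and okB: "\<forall>p \<in> set bs. poch_ok p"
    and convL: "\<forall>k<5::nat. summable (fw_term as bs (c * (x * \<alpha> ^ k)\<^sup>2))"
    and convR: "summable (fw_term (map (\<lambda>(a, A). (a, 5 * A)) as)
                  ([(1/5, 1), (2/5, 1), (3/5, 1), (4/5, 1)] @ map (\<lambda>(b, B). (b, 5 * B)) bs)
                  ((c * x\<^sup>2 / 5) ^ 5))"
  shows "(\<Sum>k<5::nat. fox_wright_star as bs (c * (x * \<alpha> ^ k)\<^sup>2)) =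
         5 * fox_wright_star (map (\<lambda>(a, A). (a, 5 * A)) as)
               ([(1/5, 1), (2/5, 1), (3/5, 1), (4/5, 1)] @ map (\<lambda>(b, B). (b, 5 * B)) bs)
               ((c * x\<^sup>2 / 5) ^ 5)"
proof -
  define \<omega> where "\<omega> = \<alpha>\<^sup>2"
  define w where "w = c * x\<^sup>2"
  define a where "a n = fw_coeff as bs n / fact n" for n
  define as' where "as' = map (\<lambda>(a, A). (a, 5 * A)) as"
  define bs' where "bs' = [(1/5, 1), (2/5, 1), (3/5, 1), (4/5, 1)] @ map (\<lambda>(b, B). (b, 5 * B)) bs"
  have primitive: "\<omega> ^ n = 1 \<longleftrightarrow> 5 dvd n" for n
    using exp_2pi_divide_power_eq_1_iff[of 5 "2 * n"]
    unfolding \<omega>_def \<alpha>_def by (simp add: power_mult[symmetric]) presburger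
  have terms: "fw_term as bs (c * (x * \<alpha> ^ j)\<^sup>2) = (\<lambda>n. a n * (\<omega> ^ j * w) ^ n)" for j
    unfolding fw_term_def a_def \<omega>_def w_def
    by (simp add: power_mult_distrib mult_ac flip: power_mult)
  have "(\<lambda>m. of_nat 5 * a (5 * m) * w ^ (5 * m)) sums (\<Sum>j<5. \<Sum>n. a n * (\<omega> ^ j * w) ^ n)"
    using convL by (intro sums_multisection primitive) (simp_all add: terms)
  moreover have "a (5 * m) * w ^ (5 * m) = fw_term as' bs' ((w / 5) ^ 5) m" for m
    using fw_term_multisection[of 5 as bs w m]
    by (simp add: a_def fw_term_def as'_def bs'_def eval_nat_numeral upt_rec)
  ultimately have "(\<lambda>m. 5 * fw_term as' bs' ((w / 5) ^ 5) m)
                     sums (\<Sum>j<5. fox_wright_star as bs (c * (x * \<alpha> ^ j)\<^sup>2))"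
    by (simp add: fox_wright_star_def terms mult.assoc)
  moreover have "(\<lambda>m. 5 * fw_term as' bs' ((w / 5) ^ 5) m) sums (5 * fox_wright_star as' bs' ((w / 5) ^ 5))"
    using convR unfolding fox_wright_star_def as'_def bs'_def w_def by (intro sums_mult summable_sums)
  ultimately show ?thesis
    unfolding as'_def bs'_def w_def by (rule sums_unique2)
qed

end
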